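(* Let $k$ be a field of prime characteristic $p$. Define $T$-spaces of $k_0\langle X\rangle$ by $H_1=\{x_1^p\}^S$ and $H_{n+1}=(H_nH_1)^S$ for $n\ge1$. Then for every $m\ge1$, every $u\in H_m$ and every $v\in k_0\langle X\rangle$, $[u,v]=uv-vu\in H_m$.
   Context: $X=\{x_1,x_2,\ldots\}$ is countably infinite; $k_0\langle X\rangle$ is the free associative (non-unital) $k$-algebra on $X$. A $T$-space is a $k$-subspace of $k_0\langle X\rangle$ invariant under every algebra endomorphism of $k_0\langle X\rangle$; $(A)^S$ is the $T$-space generated by a subset $A$. For subsets $A,B$, $AB=\{ab:a\in A,b\in B\}$. *)

theory Defs
  imports Main "HOL-Computational_Algebra.Primes"
begin

text \<open>The free non-unital associative algebra k_0<X> on X = {x_0, x_1, ...}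
  (indexed from 0): elements are finitely supported k-valued functions on words
  (lists of variable indices) vanishing on the empty word.\<close>

definition FA :: "(nat list \<Rightarrow> 'k::field) set" where
  "FA = {f. finite {w. f w \<noteq> 0} \<and> f [] = 0}"

definition fa_zero :: "nat list \<Rightarrow> 'k::field" where
  "fa_zero = (\<lambda>w. 0)"

definition fa_add :: "(nat list \<Rightarrow> 'k::field) \<Rightarrow> (nat list \<Rightarrow> 'k) \<Rightarrow> (nat list \<Rightarrow> 'k)" where
  "fa_add f g = (\<lambda>w. f w + g w)"

definition fa_sub :: "(nat list \<Rightarrow> 'k::field) \<Rightarrow> (nat list \<Rightarrow> 'k) \<Rightarrow> (nat list \<Rightarrow> 'k)" where
  "fa_sub f g = (\<lambda>w. f w - g w)"

definition fa_smult :: "'k::field \<Rightarrow> (nat list \<Rightarrow> 'k) \<Rightarrow> (nat list \<Rightarrow> 'k)" where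
  "fa_smult c f = (\<lambda>w. c * f w)"

definition fa_mult :: "(nat list \<Rightarrow> 'k::field) \<Rightarrow> (nat list \<Rightarrow> 'k) \<Rightarrow> (nat list \<Rightarrow> 'k)" where
  "fa_mult f g = (\<lambda>w. \<Sum>(u, v) \<in> {(u, v). u @ v = w}. f u * g v)"

definition fa_var :: "nat \<Rightarrow> (nat list \<Rightarrow> 'k::field)" where
  "fa_var i = (\<lambda>w. if w = [i] then 1 else 0)"

text \<open>Positive powers (f^0 is not meaningful in a non-unital algebra; set to 0).\<close>
fun fa_pow :: "(nat list \<Rightarrow> 'k::field) \<Rightarrow> nat \<Rightarrow> (nat list \<Rightarrow> 'k)" where
  "fa_pow f 0 = fa_zero"
| "fa_pow f (Suc 0) = f"
| "fa_pow f (Suc (Suc n)) = fa_mult (fa_pow f (Suc n)) f"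

definition fa_endo :: "((nat list \<Rightarrow> 'k::field) \<Rightarrow> (nat list \<Rightarrow> 'k)) \<Rightarrow> bool" where
  "fa_endo \<phi> \<longleftrightarrow> \<phi> ` FA \<subseteq> FA
     \<and> (\<forall>f\<in>FA. \<forall>g\<in>FA. \<phi> (fa_add f g) = fa_add (\<phi> f) (\<phi> g))
     \<and> (\<forall>c. \<forall>f\<in>FA. \<phi> (fa_smult c f) = fa_smult c (\<phi> f))
     \<and> (\<forall>f\<in>FA. \<forall>g\<in>FA. \<phi> (fa_mult f g) = fa_mult (\<phi> f) (\<phi> g))"

definition fa_subspace :: "(nat list \<Rightarrow> 'k::field) set \<Rightarrow> bool" where
  "fa_subspace V \<longleftrightarrow> V \<subseteq> FA \<and> fa_zero \<in> V
     \<and> (\<forall>f\<in>V. \<forall>g\<in>V. fa_add f g \<in> V) \<and> (\<forall>c. \<forall>f\<in>V. fa_smult c f \<in> V)"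

definition T_space :: "(nat list \<Rightarrow> 'k::field) set \<Rightarrow> bool" where
  "T_space V \<longleftrightarrow> fa_subspace V \<and> (\<forall>\<phi>. fa_endo \<phi> \<longrightarrow> \<phi> ` V \<subseteq> V)"

definition T_gen :: "(nat list \<Rightarrow> 'k::field) set \<Rightarrow> (nat list \<Rightarrow> 'k) set" where
  "T_gen A = \<Inter> {V. T_space V \<and> A \<subseteq> V}"

definition set_prod :: "(nat list \<Rightarrow> 'k::field) set \<Rightarrow> (nat list \<Rightarrow> 'k) set \<Rightarrow> (nat list \<Rightarrow> 'k) set" where
  "set_prod A B = {fa_mult a b | a b. a \<in> A \<and> b \<in> B}"

text \<open>H_1 = {x_1^p}^S, H_{n+1} = (H_n H_1)^S; here x_1 is fa_var 0. H 0 is unused.\<close>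
fun H :: "nat \<Rightarrow> (nat list \<Rightarrow> 'k::field) set" where
  "H 0 = {}"
| "H (Suc 0) = T_gen {fa_pow (fa_var 0) CHAR('k)}"
| "H (Suc (Suc n)) = T_gen (set_prod (H (Suc n)) (H (Suc 0)))"

end

(*
  In characteristic p, write c = [v, a] and expand (a + t c)^p in the non-commuting a, c.
  The power sums of t^j over t = 1, ..., p - 1 vanish mod p unless p - 1 divides j, so
  summing t^(p-2) ((a + t c)^p - a^p - (t c)^p) over t isolates minus the part of
  (a + t c)^p that is linear in c, and this part telescopes to [v, a^p]. Each summand is a
  combination of p-th powers, which lie in H_1 because every such power is an endomorphic
  image of x_1^p; hence [a^p, v] \<in> H_1. The elements u with [\<phi> u, v] \<in> V for all
  endomorphisms \<phi> and all v form a T-space, so the commutator property passes from the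
  generators of a T-space to the whole T-space; together with the Leibniz rule
  [b c, v] = b [c, v] + [b, v] c this gives the induction from H_n to H_(n+1).
*)

theory Submission
  imports Defs "HOL-Library.Poly_Mapping" "HOL-Number_Theory.Residues"
begin

section \<open>Power sums modulo a prime\<close>

lemma prime_dvd_sum_powers:
  assumes "prime p" and "j + 1 < p"
  shows "p dvd (\<Sum>t<p. t ^ j)"
  using assms(2)
proof (induction j rule: less_induct)
  case (less j)
  define N where "N i = (\<Sum>t<p. t ^ i)" for i
  have "(\<Sum>t<p. Suc t ^ Suc j) = N (Suc j) + p ^ Suc j"
    using sum.lessThan_Suc_shift[of "\<lambda>t. t ^ Suc j" p] by (simp add: N_def)
  moreover have "Suc t ^ Suc j = (\<Sum>i\<le>j. (Suc j choose i) * t ^ i) + t ^ Suc j" for t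
    using binomial[of t 1 "Suc j"] by (simp add: ac_simps del: power_Suc)
  ultimately have "(\<Sum>i\<le>j. (Suc j choose i) * N i) = p ^ Suc j"
    by (simp add: N_def sum.distrib sum_distrib_left sum.swap[of _ "{..<p}"] del: power_Suc)
  then have "p dvd (\<Sum>i<j. (Suc j choose i) * N i) + Suc j * N j"
    by (simp add: lessThan_Suc_atMost[symmetric])
  moreover have "p dvd (\<Sum>i<j. (Suc j choose i) * N i)"
    using less by (auto simp: N_def intro!: dvd_sum)
  ultimately have "p dvd Suc j * N j"
    by (simp add: dvd_add_right_iff)
  moreover have "\<not> p dvd Suc j"
    using less.prems by (auto dest: dvd_imp_le)
  ultimately have "p dvd N j"
    using assms(1) prime_dvd_mult_iff by blast
  then show ?case
    by (simp add: N_def)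
qed

lemma sum_powers_cong_prime:
  assumes "prime p" and "1 \<le> i" "i < p"
  shows "[(\<Sum>t\<in>{1..<p}. t ^ (p - 2 + i)) = (if i = 1 then p - 1 else 0)] (mod p)"
proof -
  have "[t ^ (p - 2 + i) = t ^ (i - 1)] (mod p)" if "t \<in> {1..<p}" for t
  proof -
    have "[t ^ (p - 1) = 1] (mod p)"
      using assms(1) that by (intro fermat_theorem) (auto dest: dvd_imp_le)
    then have "[t ^ (p - 1) * t ^ (i - 1) = 1 * t ^ (i - 1)] (mod p)"
      by (rule cong_mult) simp
    moreover have "p - 2 + i = (p - 1) + (i - 1)"
      using assms prime_ge_2_nat[of p] by linarith
    ultimately show ?thesis
      by (simp add: power_add)
  qed
  then have reduced: "[(\<Sum>t\<in>{1..<p}. t ^ (p - 2 + i)) = (\<Sum>t\<in>{1..<p}. t ^ (i - 1))] (mod p)"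
    by (rule cong_sum)
  show ?thesis
  proof (cases "i = 1")
    case False
    have "(\<Sum>t\<in>{1..<p}. t ^ (i - 1)) = (\<Sum>t<p. t ^ (i - 1))"
      using False assms(2) by (intro sum.mono_neutral_left) auto
    moreover have "p dvd (\<Sum>t<p. t ^ (i - 1))"
      using prime_dvd_sum_powers[OF assms(1), of "i - 1"] assms(2,3) by simp
    ultimately have "[(\<Sum>t\<in>{1..<p}. t ^ (i - 1)) = 0] (mod p)"
      by (simp add: cong_0_iff)
    then show ?thesis
      using cong_trans[OF reduced] False by simp
  qed (use reduced in simp)
qed

lemma of_nat_sum_powers_CHAR:
  assumes "prime CHAR('a::ring_1)" and "1 \<le> i" "i < CHAR('a)"
  shows "(of_nat (\<Sum>t\<in>{1..<CHAR('a)}. t ^ (CHAR('a) - 2 + i)) :: 'a) = (if i = 1 then -1 else 0)"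
proof -
  have "(of_nat (\<Sum>t\<in>{1..<CHAR('a)}. t ^ (CHAR('a) - 2 + i)) :: 'a)
      = of_nat (if i = 1 then CHAR('a) - 1 else 0)"
    using sum_powers_cong_prime[OF assms] by (simp only: of_nat_eq_iff_cong_CHAR)
  also have "\<dots> = (if i = 1 then -1 else 0)"
    using prime_gt_0_nat[OF assms(1)] by (simp add: of_nat_diff)
  finally show ?thesis .
qed

section \<open>Commutators with \<open>p\<close>-th powers in characteristic \<open>p\<close>\<close>

text \<open>\<open>word_sum a c n i\<close> is the sum of all products of \<open>n\<close> factors from \<open>{a, c}\<close> with exactly
  \<open>i\<close> factors \<open>c\<close>.\<close>

fun word_sum :: "'a::ring_1 \<Rightarrow> 'a \<Rightarrow> nat \<Rightarrow> nat \<Rightarrow> 'a" where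
  "word_sum a c 0 i = (if i = 0 then 1 else 0)"
| "word_sum a c (Suc n) i = a * word_sum a c n i + (if i = 0 then 0 else c * word_sum a c n (i - 1))"

lemma word_sum_eq_0: "n < i \<Longrightarrow> word_sum a c n i = 0"
  by (induction n arbitrary: i) auto

lemma word_sum_0: "word_sum a c n 0 = a ^ n"
  by (induction n) auto

lemma word_sum_diag: "word_sum a c n n = c ^ n"
  by (induction n) (auto simp: word_sum_eq_0)

lemma word_sum_commutator: "word_sum a (v * a - a * v) n 1 = v * a ^ n - a ^ n * v"
proof (induction n)
  case (Suc n)
  have "word_sum a (v * a - a * v) (Suc n) 1 = a * (v * a ^ n - a ^ n * v) + (v * a - a * v) * a ^ n"
    by (simp add: Suc[simplified] word_sum_0)
  also have "\<dots> = v * a ^ Suc n - a ^ Suc n * v"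
    by (simp add: algebra_simps power_commutes)
  finally show ?case .
qed simp

lemma power_of_nat_mult: "(of_nat t * c :: 'a::ring_1) ^ n = of_nat (t ^ n) * c ^ n"
proof (induction n)
  case (Suc n)
  have "c * (of_nat (t ^ n) * c ^ n) = of_nat (t ^ n) * (c * c ^ n)"
    by (metis mult.assoc mult_of_nat_commute)
  then show ?case
    by (simp add: Suc mult.assoc)
qed simp

lemma power_add_of_nat_mult:
  "(a + of_nat t * c :: 'a::ring_1) ^ n = (\<Sum>i\<le>n. of_nat (t ^ i) * word_sum a c n i)"
proof (induction n)
  case (Suc n)
  have left: "a * (of_nat (t ^ i) * x) = of_nat (t ^ i) * (a * x)" for i x
    by (metis mult.assoc mult_of_nat_commute)
  have right: "of_nat t * c * (of_nat (t ^ i) * x) = of_nat (t ^ Suc i) * (c * x)" for i x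
    by (metis mult.assoc mult_of_nat_commute of_nat_mult power_Suc)
  have "(a + of_nat t * c) ^ Suc n
      = (\<Sum>i\<le>n. of_nat (t ^ i) * (a * word_sum a c n i))
        + (\<Sum>i\<le>n. of_nat (t ^ Suc i) * (c * word_sum a c n i))"
    by (simp only: power_Suc Suc distrib_right sum_distrib_left left right sum.distrib)
  also have "(\<Sum>i\<le>n. of_nat (t ^ i) * (a * word_sum a c n i))
      = (\<Sum>i\<le>Suc n. of_nat (t ^ i) * (a * word_sum a c n i))"
    by (simp add: word_sum_eq_0)
  also have "(\<Sum>i\<le>n. of_nat (t ^ Suc i) * (c * word_sum a c n i))
      = (\<Sum>i\<le>Suc n. of_nat (t ^ i) * (if i = 0 then 0 else c * word_sum a c n (i - 1)))"
    by (simp only: sum.atMost_Suc_shift) simp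
  finally show ?case
    by (simp add: sum.distrib[symmetric] distrib_left)
qed simp

lemma commutator_pth_power_CHAR:
  fixes a v :: "'a::ring_1"
  defines "p \<equiv> CHAR('a)" and "c \<equiv> v * a - a * v"
  assumes "prime p"
  shows "a ^ p * v - v * a ^ p
    = (\<Sum>t\<in>{1..<p}. of_nat (t ^ (p - 2)) * ((a + of_nat t * c) ^ p - a ^ p - (of_nat t * c) ^ p))"
proof -
  have p2: "2 \<le> p"
    using assms(3) prime_ge_2_nat by blast
  have "{..p} = insert 0 (insert p {1..<p})"
    using p2 by auto
  then have middle_terms: "(a + of_nat t * c) ^ p - a ^ p - (of_nat t * c) ^ p
      = (\<Sum>i\<in>{1..<p}. of_nat (t ^ i) * word_sum a c p i)" for t
    using p2 by (simp add: power_add_of_nat_mult word_sum_0 word_sum_diag power_of_nat_mult)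
  have merge_powers: "of_nat (t ^ (p - 2)) * (of_nat (t ^ i) * x) = of_nat (t ^ (p - 2 + i)) * x"
    for t i and x :: 'a
    by (simp only: mult.assoc[symmetric] of_nat_mult[symmetric] power_add[symmetric])
  have "(\<Sum>t\<in>{1..<p}. of_nat (t ^ (p - 2)) * ((a + of_nat t * c) ^ p - a ^ p - (of_nat t * c) ^ p))
      = (\<Sum>t\<in>{1..<p}. \<Sum>i\<in>{1..<p}. of_nat (t ^ (p - 2 + i)) * word_sum a c p i)"
    by (simp only: middle_terms sum_distrib_left merge_powers)
  also have "\<dots> = (\<Sum>i\<in>{1..<p}. of_nat (\<Sum>t\<in>{1..<p}. t ^ (p - 2 + i)) * word_sum a c p i)"
    by (subst sum.swap) (simp only: of_nat_sum sum_distrib_right)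
  also have "\<dots> = (\<Sum>i\<in>{1..<p}. if i = 1 then - word_sum a c p i else 0)"
    using of_nat_sum_powers_CHAR[OF assms(3)[unfolded p_def]] by (intro sum.cong) (auto simp: p_def)
  also have "\<dots> = a ^ p * v - v * a ^ p"
    using p2 word_sum_commutator[of a v p] by (simp add: c_def)
  finally show ?thesis
    by (rule sym)
qed

section \<open>The free algebra as a monoid algebra\<close>

text \<open>The unital free algebra \<open>k\<langle>X\<rangle>\<close> is modelled as the monoid algebra of the word monoid;
  \<open>FA\<close> is then the set of coefficient functions of elements with zero constant term.\<close>

instantiation list :: (type) monoid_add
begin
definition zero_list :: "'a list" where "zero_list = []"
definition plus_list :: "'a list \<Rightarrow> 'a list \<Rightarrow> 'a list" where "plus_list xs ys = xs @ ys"
instance by standard (auto simp: zero_list_def plus_list_def)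
end

type_synonym 'k free_alg = "nat list \<Rightarrow>\<^sub>0 'k"

abbreviation coefficient :: "('a \<Rightarrow>\<^sub>0 'b::zero) \<Rightarrow> 'a \<Rightarrow> 'b"
  where "coefficient \<equiv> Poly_Mapping.lookup"

definition scalar :: "'k::field \<Rightarrow> 'k free_alg" where
  "scalar c = Poly_Mapping.single 0 c"

definition constant_term :: "'k::field free_alg \<Rightarrow> 'k" where
  "constant_term P = coefficient P []"

lemma CHAR_poly_mapping: "CHAR('a::monoid_add \<Rightarrow>\<^sub>0 'b::semiring_1) = CHAR('b)"
proof (rule CHAR_eqI)
  show "of_nat CHAR('b) = (0 :: 'a \<Rightarrow>\<^sub>0 'b)"
    by (simp flip: single_of_nat)
  show "CHAR('b) dvd n" if "of_nat n = (0 :: 'a \<Rightarrow>\<^sub>0 'b)" for n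
    using arg_cong[OF that, of "\<lambda>P. coefficient P 0"]
    by (simp add: lookup_of_nat of_nat_eq_0_iff_char_dvd)
qed

lemma splits_eq_image_take_drop:
  "{(u, v). u @ v = w} = (\<lambda>i. (take i w, drop i w)) ` {..length w}"
proof -
  have "(u, v) \<in> (\<lambda>i. (take i w, drop i w)) ` {..length w}" if "u @ v = w" for u v
    using that by (intro image_eqI[of _ _ "length u"]) auto
  then show ?thesis
    by auto
qed

lemma finite_splits: "finite {(u, v). u @ v = w}"
  unfolding splits_eq_image_take_drop by simp

lemma coefficient_times:
  "coefficient (P * Q) = fa_mult (coefficient P) (coefficient (Q :: 'k::field free_alg))"
proof
  fix w
  have "coefficient (P * Q) w = (\<Sum>(u, v). coefficient P u * coefficient Q v when w = u + v)"
    unfolding times_poly_mapping.rep_eq by (rule prod_fun_unfold_prod) simp_all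
  also have "\<dots> = (\<Sum>(u, v)\<in>{(u, v). u @ v = w}. coefficient P u * coefficient Q v when w = u + v)"
    by (rule Sum_any.expand_superset) (auto simp: finite_splits plus_list_def)
  also have "\<dots> = fa_mult (coefficient P) (coefficient Q) w"
    unfolding fa_mult_def by (rule sum.cong) (auto simp: plus_list_def)
  finally show "coefficient (P * Q) w = fa_mult (coefficient P) (coefficient Q) w" .
qed

lemma sum_eq_single:
  assumes "finite S" and "x \<in> S" and "\<And>y. y \<in> S \<Longrightarrow> y \<noteq> x \<Longrightarrow> f y = 0"
  shows "sum f S = f x"
  using sum.mono_neutral_left[of S "{x}" f] assms by simp

lemma coefficient_scalar_times: "coefficient (scalar c * Q) w = c * coefficient Q w"
proof -
  have "coefficient (scalar c * Q) w = (\<lambda>(u, v). coefficient (scalar c) u * coefficient Q v) ([], w)"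
    unfolding coefficient_times fa_mult_def
    by (rule sum_eq_single) (auto simp: finite_splits scalar_def lookup_single zero_list_def)
  then show ?thesis
    by (simp add: scalar_def zero_list_def)
qed

lemma coefficient_times_scalar: "coefficient (Q * scalar c) w = coefficient Q w * c"
proof -
  have "coefficient (Q * scalar c) w = (\<lambda>(u, v). coefficient Q u * coefficient (scalar c) v) (w, [])"
    unfolding coefficient_times fa_mult_def
    by (rule sum_eq_single) (auto simp: finite_splits scalar_def lookup_single zero_list_def)
  then show ?thesis
    by (simp add: scalar_def zero_list_def)
qed

lemma scalar_commute: "scalar c * Q = Q * scalar c"
  by (rule poly_mapping_eqI) (simp add: coefficient_scalar_times coefficient_times_scalar mult.commute)

lemma scalar_times_scalar: "scalar a * scalar b = scalar (a * b)"
  by (simp add: scalar_def mult_single)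

lemma scalar_add: "scalar (a + b) = scalar a + scalar b"
  by (simp add: scalar_def single_add)

lemma scalar_of_nat: "scalar (of_nat n) = of_nat n"
  by (simp add: scalar_def)

lemma constant_term_times: "constant_term (P * Q) = constant_term P * constant_term Q"
proof -
  have "constant_term (P * Q) = (\<lambda>(u, v). coefficient P u * coefficient Q v) ([], [])"
    unfolding constant_term_def coefficient_times fa_mult_def
    by (rule sum_eq_single) (auto simp: finite_splits)
  then show ?thesis
    by (simp add: constant_term_def)
qed

lemma constant_term_add: "constant_term (P + Q) = constant_term P + constant_term Q"
  by (simp add: constant_term_def lookup_add)

lemma constant_term_diff: "constant_term (P - Q) = constant_term P - constant_term Q"
  by (simp add: constant_term_def lookup_minus)

lemma constant_term_sum: "constant_term (\<Sum>i\<in>I. f i) = (\<Sum>i\<in>I. constant_term (f i))"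
  by (simp add: constant_term_def lookup_sum)

lemma constant_term_scalar: "constant_term (scalar c) = c"
  by (simp add: constant_term_def scalar_def zero_list_def)

lemma constant_term_of_nat_times: "constant_term (of_nat n * P) = of_nat n * constant_term P"
  by (metis constant_term_scalar constant_term_times scalar_of_nat)

lemma coefficient_in_FA_iff: "coefficient P \<in> FA \<longleftrightarrow> constant_term (P :: 'k::field free_alg) = 0"
  by (simp add: FA_def constant_term_def)

lemma FA_coefficientE:
  assumes "f \<in> FA"
  obtains P :: "'k::field free_alg" where "f = coefficient P" and "constant_term P = 0"
proof
  show "f = coefficient (Abs_poly_mapping f)" and "constant_term (Abs_poly_mapping f) = 0"
    using assms by (simp_all add: FA_def constant_term_def)
qed

lemma fa_add_coefficient: "fa_add (coefficient P) (coefficient Q) = coefficient (P + Q :: 'k::field free_alg)"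
  by (simp add: fa_add_def fun_eq_iff lookup_add)

lemma fa_sub_coefficient: "fa_sub (coefficient P) (coefficient Q) = coefficient (P - Q :: 'k::field free_alg)"
  by (simp add: fa_sub_def fun_eq_iff lookup_minus)

lemma fa_smult_coefficient: "fa_smult c (coefficient P) = coefficient (scalar c * P :: 'k::field free_alg)"
  by (simp add: fa_smult_def fun_eq_iff coefficient_scalar_times)

lemma fa_zero_eq_coefficient: "fa_zero = coefficient (0 :: 'k::field free_alg)"
  by (simp add: fa_zero_def fun_eq_iff)

lemma fa_var_eq_coefficient: "fa_var i = coefficient (Poly_Mapping.single [i] 1 :: 'k::field free_alg)"
  by (simp add: fa_var_def fun_eq_iff lookup_single when_def eq_commute)

lemma fa_pow_coefficient: "fa_pow (coefficient P) (Suc n) = coefficient (P ^ Suc n :: 'k::field free_alg)"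
  by (induction n) (simp_all add: coefficient_times power_Suc2 del: power_Suc)

lemma sum_single_coefficient: "(\<Sum>w\<in>Poly_Mapping.keys Q. Poly_Mapping.single w (coefficient Q w)) = Q"
proof (rule poly_mapping_eqI)
  fix w
  have "coefficient (\<Sum>u\<in>Poly_Mapping.keys Q. Poly_Mapping.single u (coefficient Q u)) w
      = (\<Sum>u\<in>Poly_Mapping.keys Q. coefficient Q u when u = w)"
    by (simp add: lookup_sum lookup_single)
  also have "\<dots> = coefficient Q w"
    by (cases "w \<in> Poly_Mapping.keys Q") (simp_all add: when_def in_keys_iff)
  finally show "coefficient (\<Sum>u\<in>Poly_Mapping.keys Q. Poly_Mapping.single u (coefficient Q u)) w
      = coefficient Q w" .
qed

section \<open>Substitution endomorphisms\<close>

definition substitute :: "(nat \<Rightarrow> 'k::field free_alg) \<Rightarrow> 'k free_alg \<Rightarrow> 'k free_alg" where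
  "substitute s Q = (\<Sum>w\<in>Poly_Mapping.keys Q. scalar (coefficient Q w) * prod_list (map s w))"

lemma substitute_superset:
  assumes "finite A" and "Poly_Mapping.keys Q \<subseteq> A"
  shows "substitute s Q = (\<Sum>w\<in>A. scalar (coefficient Q w) * prod_list (map s w))"
  unfolding substitute_def using assms
  by (intro sum.mono_neutral_left) (auto simp: in_keys_iff scalar_def)

lemma substitute_add: "substitute s (P + Q) = substitute s P + substitute s Q"
proof -
  let ?A = "Poly_Mapping.keys P \<union> Poly_Mapping.keys Q"
  have "substitute s (P + Q) = (\<Sum>w\<in>?A. scalar (coefficient (P + Q) w) * prod_list (map s w))"
    using keys_add[of P Q] by (intro substitute_superset) auto
  also have "\<dots> = (\<Sum>w\<in>?A. scalar (coefficient P w) * prod_list (map s w))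
      + (\<Sum>w\<in>?A. scalar (coefficient Q w) * prod_list (map s w))"
    by (simp add: lookup_add scalar_add distrib_right sum.distrib)
  also have "\<dots> = substitute s P + substitute s Q"
    by (simp add: substitute_superset[of ?A P] substitute_superset[of ?A Q])
  finally show ?thesis .
qed

lemma substitute_zero: "substitute s 0 = 0"
  by (simp add: substitute_def)

lemma substitute_sum: "substitute s (\<Sum>i\<in>I. f i) = (\<Sum>i\<in>I. substitute s (f i))"
  by (induction I rule: infinite_finite_induct) (simp_all add: substitute_zero substitute_add)

lemma substitute_single: "substitute s (Poly_Mapping.single w c) = scalar c * prod_list (map s w)"
  using substitute_superset[of "{w}" "Poly_Mapping.single w c" s] by simp

lemma substitute_times: "substitute s (P * Q) = substitute s P * substitute s Q"
proof -
  let ?m = "\<lambda>Q w. scalar (coefficient Q w) * prod_list (map s w)"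
  have "P * Q = (\<Sum>u\<in>Poly_Mapping.keys P. \<Sum>v\<in>Poly_Mapping.keys Q.
      Poly_Mapping.single (u @ v) (coefficient P u * coefficient Q v))"
    by (subst (1 2) sum_single_coefficient[symmetric])
      (simp add: sum_product mult_single plus_list_def)
  then have "substitute s (P * Q) = (\<Sum>u\<in>Poly_Mapping.keys P. \<Sum>v\<in>Poly_Mapping.keys Q.
      scalar (coefficient P u * coefficient Q v) * prod_list (map s (u @ v)))"
    by (simp add: substitute_sum substitute_single)
  also have "\<dots> = (\<Sum>u\<in>Poly_Mapping.keys P. \<Sum>v\<in>Poly_Mapping.keys Q. ?m P u * ?m Q v)"
  proof (intro sum.cong refl)
    fix u v
    have "scalar (coefficient Q v) * prod_list (map s u) = prod_list (map s u) * scalar (coefficient Q v)"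
      by (rule scalar_commute)
    then show "scalar (coefficient P u * coefficient Q v) * prod_list (map s (u @ v)) = ?m P u * ?m Q v"
      by (simp add: scalar_times_scalar[symmetric] mult.assoc)
        (simp add: mult.assoc[symmetric])
  qed
  also have "\<dots> = substitute s P * substitute s Q"
    by (simp add: substitute_def sum_product)
  finally show ?thesis .
qed

lemma substitute_scalar_times: "substitute s (scalar c * Q) = scalar c * substitute s Q"
proof -
  have "scalar c = Poly_Mapping.single [] c"
    by (simp add: scalar_def zero_list_def)
  then show ?thesis
    by (simp add: substitute_times substitute_single)
qed

lemma substitute_one: "substitute s 1 = 1"
proof -
  have one: "Poly_Mapping.single [] 1 = (1 :: 'k::field free_alg)"
    by (metis single_one zero_list_def)
  have "substitute s (Poly_Mapping.single [] 1) = 1"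
    by (simp add: substitute_single scalar_def)
  then show ?thesis
    by (simp only: one)
qed

lemma substitute_power: "substitute s (P ^ n) = substitute s P ^ n"
  by (induction n) (simp_all add: substitute_one substitute_times)

lemma constant_term_prod_list:
  "(\<And>i. constant_term (s i) = 0) \<Longrightarrow> w \<noteq> [] \<Longrightarrow> constant_term (prod_list (map s w)) = 0"
  by (induction w) (auto simp: constant_term_times)

lemma constant_term_substitute:
  assumes "constant_term Q = 0" and "\<And>i. constant_term (s i) = 0"
  shows "constant_term (substitute s Q) = 0"
proof -
  have "constant_term (scalar (coefficient Q w) * prod_list (map s w)) = 0" for w
  proof (cases "w = []")
    case True
    then show ?thesis
      using assms(1) by (simp add: constant_term_def scalar_def)
  next
    case False
    then show ?thesis
      using assms(2) constant_term_prod_list[of s w] by (simp add: constant_term_times)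
  qed
  then show ?thesis
    by (simp add: substitute_def constant_term_sum)
qed

text \<open>Only the values on \<open>FA\<close> matter: \<open>Abs_poly_mapping\<close> is junk on functions of infinite support.\<close>

definition substitution :: "(nat \<Rightarrow> 'k::field free_alg) \<Rightarrow> (nat list \<Rightarrow> 'k) \<Rightarrow> (nat list \<Rightarrow> 'k)" where
  "substitution s f = coefficient (substitute s (Abs_poly_mapping f))"

lemma substitution_coefficient: "substitution s (coefficient P) = coefficient (substitute s P)"
  by (simp add: substitution_def)

lemma fa_endo_substitution:
  fixes s :: "nat \<Rightarrow> 'k::field free_alg"
  assumes "\<And>i. constant_term (s i) = 0"
  shows "fa_endo (substitution s)"
  unfolding fa_endo_def
proof (intro conjI ballI allI subsetI)
  fix g assume "g \<in> substitution s ` FA"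
  then obtain P where "g = substitution s (coefficient P)" and "constant_term P = 0"
    by (auto elim: FA_coefficientE)
  then show "g \<in> FA"
    using constant_term_substitute[OF _ assms]
    by (simp add: substitution_coefficient coefficient_in_FA_iff)
next
  fix f g :: "nat list \<Rightarrow> 'k" assume "f \<in> FA" "g \<in> FA"
  then obtain P Q where "f = coefficient P" "g = coefficient Q"
    by (metis FA_coefficientE)
  then show "substitution s (fa_add f g) = fa_add (substitution s f) (substitution s g)"
    and "substitution s (fa_mult f g) = fa_mult (substitution s f) (substitution s g)"
    by (simp_all add: fa_add_coefficient coefficient_times[symmetric] substitution_coefficient
        substitute_add substitute_times)
next
  fix c and f :: "nat list \<Rightarrow> 'k" assume "f \<in> FA"
  then obtain P where "f = coefficient P"
    by (metis FA_coefficientE)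
  then show "substitution s (fa_smult c f) = fa_smult c (substitution s f)"
    by (simp add: fa_smult_coefficient substitution_coefficient substitute_scalar_times)
qed

section \<open>\<open>T\<close>-spaces\<close>

lemma fa_mult_in_FA: "f \<in> FA \<Longrightarrow> g \<in> FA \<Longrightarrow> fa_mult f g \<in> (FA :: (nat list \<Rightarrow> 'k::field) set)"
  by (elim FA_coefficientE) (simp add: coefficient_times[symmetric] coefficient_in_FA_iff constant_term_times)

lemma fa_pow_in_FA: "f \<in> FA \<Longrightarrow> fa_pow f n \<in> (FA :: (nat list \<Rightarrow> 'k::field) set)"
  by (induction f n rule: fa_pow.induct) (simp_all add: fa_mult_in_FA, simp add: FA_def fa_zero_def)

lemma fa_var_in_FA: "fa_var i \<in> (FA :: (nat list \<Rightarrow> 'k::field) set)"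
  by (simp add: FA_def fa_var_def)

lemma fa_subspace_FA: "fa_subspace (FA :: (nat list \<Rightarrow> 'k::field) set)"
  unfolding fa_subspace_def
proof (intro conjI ballI allI subsetI)
  show "fa_zero \<in> (FA :: (nat list \<Rightarrow> 'k) set)"
    by (simp add: FA_def fa_zero_def)
next
  fix f g :: "nat list \<Rightarrow> 'k" assume "f \<in> FA" "g \<in> FA"
  then show "fa_add f g \<in> FA"
    by (elim FA_coefficientE) (simp add: fa_add_coefficient coefficient_in_FA_iff constant_term_add)
next
  fix c and f :: "nat list \<Rightarrow> 'k" assume "f \<in> FA"
  then show "fa_smult c f \<in> FA"
    by (elim FA_coefficientE)
      (simp add: fa_smult_coefficient coefficient_in_FA_iff constant_term_times constant_term_scalar)
qed simp

lemma fa_subspace_zero: "fa_subspace V \<Longrightarrow> fa_zero \<in> V"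
  unfolding fa_subspace_def by blast

lemma fa_subspace_add: "fa_subspace V \<Longrightarrow> f \<in> V \<Longrightarrow> g \<in> V \<Longrightarrow> fa_add f g \<in> V"
  unfolding fa_subspace_def by blast

lemma fa_subspace_smult: "fa_subspace V \<Longrightarrow> f \<in> V \<Longrightarrow> fa_smult c f \<in> V"
  unfolding fa_subspace_def by blast

lemma T_space_imp_fa_subspace: "T_space V \<Longrightarrow> fa_subspace V"
  unfolding T_space_def by blast

lemma T_space_endo_closed: "T_space V \<Longrightarrow> fa_endo \<phi> \<Longrightarrow> f \<in> V \<Longrightarrow> \<phi> f \<in> V"
  unfolding T_space_def by blast

lemma T_space_subset_FA: "T_space V \<Longrightarrow> V \<subseteq> FA"
  unfolding T_space_def fa_subspace_def by blast

lemma T_space_FA: "T_space (FA :: (nat list \<Rightarrow> 'k::field) set)"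
  unfolding T_space_def fa_endo_def using fa_subspace_FA by blast

lemma T_gen_least: "T_space W \<Longrightarrow> A \<subseteq> W \<Longrightarrow> T_gen A \<subseteq> W"
  unfolding T_gen_def by blast

lemma T_gen_superset: "A \<subseteq> T_gen A"
  unfolding T_gen_def by blast

text \<open>The hypothesis is needed: otherwise no \<open>T\<close>-space contains \<open>A\<close> and \<open>T_gen A\<close> is \<open>UNIV\<close>.\<close>

lemma T_space_T_gen:
  assumes "A \<subseteq> (FA :: (nat list \<Rightarrow> 'k::field) set)"
  shows "T_space (T_gen A)"
  unfolding T_space_def fa_subspace_def
proof (intro conjI ballI allI impI subsetI)
  show "f \<in> FA" if "f \<in> T_gen A" for f
    using that T_gen_least[OF T_space_FA assms] by blast
  show "fa_zero \<in> T_gen A"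
    unfolding T_gen_def by (auto simp: T_space_def fa_subspace_def)
  show "fa_add f g \<in> T_gen A" if "f \<in> T_gen A" "g \<in> T_gen A" for f g
    using that unfolding T_gen_def by (auto simp: T_space_def fa_subspace_def)
  show "fa_smult c f \<in> T_gen A" if "f \<in> T_gen A" for c f
    using that unfolding T_gen_def by (auto simp: T_space_def fa_subspace_def)
  show "g \<in> T_gen A" if "fa_endo \<phi>" "g \<in> \<phi> ` T_gen A" for \<phi> g
    using that unfolding T_gen_def T_space_def by blast
qed

lemma fa_endo_FA: "fa_endo \<phi> \<Longrightarrow> f \<in> FA \<Longrightarrow> \<phi> f \<in> FA"
  unfolding fa_endo_def by blast

lemma fa_endo_add: "fa_endo \<phi> \<Longrightarrow> f \<in> FA \<Longrightarrow> g \<in> FA \<Longrightarrow> \<phi> (fa_add f g) = fa_add (\<phi> f) (\<phi> g)"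
  unfolding fa_endo_def by blast

lemma fa_endo_smult: "fa_endo \<phi> \<Longrightarrow> f \<in> FA \<Longrightarrow> \<phi> (fa_smult c f) = fa_smult c (\<phi> f)"
  unfolding fa_endo_def by blast

lemma fa_endo_fa_mult: "fa_endo \<phi> \<Longrightarrow> f \<in> FA \<Longrightarrow> g \<in> FA \<Longrightarrow> \<phi> (fa_mult f g) = fa_mult (\<phi> f) (\<phi> g)"
  unfolding fa_endo_def by blast

lemma fa_endo_zero:
  assumes "fa_endo \<phi>"
  shows "\<phi> fa_zero = (fa_zero :: nat list \<Rightarrow> 'k::field)"
proof -
  have "fa_smult 0 f = (fa_zero :: nat list \<Rightarrow> 'k)" for f
    by (simp add: fa_smult_def fa_zero_def)
  moreover have "\<phi> (fa_smult 0 fa_zero) = fa_smult 0 (\<phi> fa_zero)"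
    using assms fa_subspace_zero[OF fa_subspace_FA] unfolding fa_endo_def by blast
  ultimately show ?thesis
    by metis
qed

lemma fa_endo_fa_pow:
  assumes "fa_endo \<phi>" and "f \<in> (FA :: (nat list \<Rightarrow> 'k::field) set)"
  shows "\<phi> (fa_pow f (Suc n)) = fa_pow (\<phi> f) (Suc n)"
proof (induction n)
  case (Suc n)
  then show ?case
    using assms fa_pow_in_FA[OF assms(2), of "Suc n"] unfolding fa_endo_def by simp
qed simp

abbreviation fa_commutator :: "(nat list \<Rightarrow> 'k::field) \<Rightarrow> (nat list \<Rightarrow> 'k) \<Rightarrow> (nat list \<Rightarrow> 'k)" where
  "fa_commutator f g \<equiv> fa_sub (fa_mult f g) (fa_mult g f)"

lemma fa_commutator_coefficient:
  "fa_commutator (coefficient P) (coefficient Q) = coefficient (P * Q - Q * P :: 'k::field free_alg)"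
  by (simp add: coefficient_times[symmetric] fa_sub_coefficient)

lemma fa_commutator_zero: "fa_commutator fa_zero (g :: nat list \<Rightarrow> 'k::field) = fa_zero"
  by (simp add: fa_mult_def fa_zero_def fa_sub_def)

lemma fa_commutator_add:
  assumes "f \<in> FA" "g \<in> FA" "h \<in> (FA :: (nat list \<Rightarrow> 'k::field) set)"
  shows "fa_commutator (fa_add f g) h = fa_add (fa_commutator f h) (fa_commutator g h)"
proof -
  obtain P Q R :: "'k free_alg" where "f = coefficient P" "g = coefficient Q" "h = coefficient R"
    using assms by (metis FA_coefficientE)
  then show ?thesis
    by (simp add: fa_add_coefficient fa_commutator_coefficient algebra_simps)
qed

lemma fa_commutator_smult:
  assumes "f \<in> FA" "h \<in> (FA :: (nat list \<Rightarrow> 'k::field) set)"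
  shows "fa_commutator (fa_smult c f) h = fa_smult c (fa_commutator f h)"
proof -
  obtain P R :: "'k free_alg" where "f = coefficient P" "h = coefficient R"
    using assms by (metis FA_coefficientE)
  moreover have "scalar c * P * R - R * (scalar c * P) = scalar c * (P * R - R * P)"
    by (simp add: mult.assoc[symmetric] scalar_commute[of c R] right_diff_distrib)
  ultimately show ?thesis
    by (simp add: fa_smult_coefficient fa_commutator_coefficient)
qed

lemma fa_commutator_fa_mult:
  assumes "f \<in> FA" "g \<in> FA" "h \<in> (FA :: (nat list \<Rightarrow> 'k::field) set)"
  shows "fa_commutator (fa_mult f g) h
    = fa_add (fa_mult f (fa_commutator g h)) (fa_mult (fa_commutator f h) g)"
proof -
  obtain P Q R :: "'k free_alg" where "f = coefficient P" "g = coefficient Q" "h = coefficient R"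
    using assms by (metis FA_coefficientE)
  then show ?thesis
    by (simp add: coefficient_times[symmetric] fa_sub_coefficient fa_add_coefficient algebra_simps)
qed

lemma T_gen_commutator_closed:
  assumes V: "T_space V" and G: "G \<subseteq> (FA :: (nat list \<Rightarrow> 'k::field) set)"
    and generators: "\<And>\<phi> g h. fa_endo \<phi> \<Longrightarrow> g \<in> G \<Longrightarrow> h \<in> FA \<Longrightarrow> fa_commutator (\<phi> g) h \<in> V"
    and "u \<in> T_gen G" and "h \<in> FA"
  shows "fa_commutator u h \<in> V"
proof -
  define W where "W = {u \<in> FA. \<forall>\<phi>. fa_endo \<phi> \<longrightarrow> (\<forall>h\<in>FA. fa_commutator (\<phi> u) h \<in> V)}"
  have V_sub: "fa_subspace V"
    using V by (rule T_space_imp_fa_subspace)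
  have "T_space W"
    unfolding T_space_def fa_subspace_def
  proof (intro conjI ballI allI impI subsetI)
    show "f \<in> FA" if "f \<in> W" for f
      using that unfolding W_def by blast
    show "fa_zero \<in> W"
      unfolding W_def using fa_subspace_zero[OF fa_subspace_FA] fa_subspace_zero[OF V_sub]
      by (auto simp: fa_endo_zero fa_commutator_zero)
    show "fa_add f g \<in> W" if "f \<in> W" "g \<in> W" for f g
    proof -
      have FA: "f \<in> FA" "g \<in> FA"
        using that by (simp_all add: W_def)
      have "fa_commutator (\<phi> (fa_add f g)) h \<in> V" if "fa_endo \<phi>" "h \<in> FA" for \<phi> h
      proof -
        have "fa_commutator (\<phi> (fa_add f g)) h
            = fa_add (fa_commutator (\<phi> f) h) (fa_commutator (\<phi> g) h)"
          using that FA by (simp add: fa_endo_add fa_endo_FA fa_commutator_add)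
        then show ?thesis
          using that \<open>f \<in> W\<close> \<open>g \<in> W\<close> fa_subspace_add[OF V_sub] by (simp add: W_def)
      qed
      then show ?thesis
        using FA fa_subspace_add[OF fa_subspace_FA] by (simp add: W_def)
    qed
    show "fa_smult c f \<in> W" if "f \<in> W" for c f
    proof -
      have FA: "f \<in> FA"
        using that by (simp add: W_def)
      have "fa_commutator (\<phi> (fa_smult c f)) h \<in> V" if "fa_endo \<phi>" "h \<in> FA" for \<phi> h
      proof -
        have "fa_commutator (\<phi> (fa_smult c f)) h = fa_smult c (fa_commutator (\<phi> f) h)"
          using that FA by (simp add: fa_endo_smult fa_endo_FA fa_commutator_smult)
        then show ?thesis
          using that \<open>f \<in> W\<close> fa_subspace_smult[OF V_sub] by (simp add: W_def)
      qed
      then show ?thesis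
        using FA fa_subspace_smult[OF fa_subspace_FA] by (simp add: W_def)
    qed
    show "g \<in> W" if \<psi>: "fa_endo \<psi>" and "g \<in> \<psi> ` W" for \<psi> g
    proof -
      obtain f where f: "f \<in> W" "g = \<psi> f"
        using \<open>g \<in> \<psi> ` W\<close> by blast
      have "fa_commutator (\<phi> g) h \<in> V" if "fa_endo \<phi>" "h \<in> FA" for \<phi> h
      proof -
        have "fa_endo (\<phi> \<circ> \<psi>)"
          using that(1) \<psi> unfolding fa_endo_def by (auto simp: image_subset_iff)
        then have "fa_commutator ((\<phi> \<circ> \<psi>) f) h \<in> V"
          using f(1) that(2) unfolding W_def by blast
        then show ?thesis
          by (simp add: f(2))
      qed
      moreover have "g \<in> FA"
        using f \<psi> fa_endo_FA unfolding W_def by blast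
      ultimately show ?thesis
        unfolding W_def by blast
    qed
  qed
  moreover have "G \<subseteq> W"
    unfolding W_def using G generators by blast
  ultimately have "u \<in> W"
    using T_gen_least \<open>u \<in> T_gen G\<close> by blast
  moreover have "fa_endo id"
    unfolding fa_endo_def by simp
  ultimately show ?thesis
    using \<open>h \<in> FA\<close> unfolding W_def by fastforce
qed

lemma fa_subspace_coefficient_diff:
  assumes "fa_subspace V" "coefficient P \<in> V" "coefficient Q \<in> V"
  shows "coefficient (P - Q :: 'k::field free_alg) \<in> V"
proof -
  have "fa_add (coefficient P) (fa_smult (-1) (coefficient Q)) \<in> V"
    using assms by (simp add: fa_subspace_add fa_subspace_smult)
  moreover have "scalar (-1) = (-1 :: 'k free_alg)"
    by (simp add: scalar_def single_uminus)
  ultimately show ?thesis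
    by (simp add: fa_smult_coefficient fa_add_coefficient)
qed

lemma fa_subspace_coefficient_of_nat_times:
  assumes "fa_subspace V" "coefficient Q \<in> V"
  shows "coefficient (of_nat n * Q :: 'k::field free_alg) \<in> V"
  using fa_subspace_smult[OF assms, of "of_nat n"] by (simp add: fa_smult_coefficient scalar_of_nat)

lemma fa_subspace_coefficient_sum:
  assumes "fa_subspace V" "\<And>i. i \<in> I \<Longrightarrow> coefficient (f i :: 'k::field free_alg) \<in> V"
  shows "coefficient (\<Sum>i\<in>I. f i) \<in> V"
  using assms(2)
proof (induction I rule: infinite_finite_induct)
  case (insert i I)
  then show ?case
    using fa_subspace_add[OF assms(1)] by (simp add: fa_add_coefficient[symmetric])
qed (use fa_subspace_zero[OF assms(1)] in \<open>simp_all add: fa_zero_eq_coefficient\<close>)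

lemma T_space_power_closed:
  fixes V :: "(nat list \<Rightarrow> 'k::field) set"
  assumes "T_space V" and "fa_pow (fa_var 0) (Suc n) \<in> V" and "constant_term B = 0"
  shows "coefficient (B ^ Suc n) \<in> V"
proof -
  have "substitution (\<lambda>_. B) (fa_pow (fa_var 0) (Suc n)) \<in> V"
    using assms by (blast intro: T_space_endo_closed fa_endo_substitution)
  moreover have "substitute (\<lambda>_. B) (Poly_Mapping.single [0] 1) = B"
    by (simp add: substitute_single scalar_def)
  ultimately show ?thesis
    by (simp add: fa_var_eq_coefficient fa_pow_coefficient substitution_coefficient substitute_power
        del: power_Suc)
qed

lemma T_space_commutator_pth_power:
  fixes V :: "(nat list \<Rightarrow> 'k::field) set"
  assumes "prime CHAR('k)" and "T_space V" and "fa_pow (fa_var 0) CHAR('k) \<in> V"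
    and "constant_term A = 0" and "constant_term Q = 0"
  shows "coefficient (A ^ CHAR('k) * Q - Q * A ^ CHAR('k)) \<in> V"
proof -
  define p where "p = CHAR('k)"
  obtain n where n: "p = Suc n"
    using assms(1) p_def by (metis not0_implies_Suc prime_gt_0_nat neq0_conv)
  have V_sub: "fa_subspace V"
    using assms(2) by (rule T_space_imp_fa_subspace)
  have "fa_pow (fa_var 0) (Suc n) \<in> V"
    using assms(3) n by (simp add: p_def)
  then have power_in_V: "coefficient (B ^ p) \<in> V" if "constant_term B = 0" for B
    using T_space_power_closed[OF assms(2) _ that] by (simp only: n)
  define c where "c = Q * A - A * Q"
  have c: "constant_term c = 0"
    using assms(4,5) by (simp add: c_def constant_term_diff constant_term_times)
  have "A ^ p * Q - Q * A ^ p = (\<Sum>t\<in>{1..<p}. of_nat (t ^ (p - 2)) *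
      ((A + of_nat t * c) ^ p - A ^ p - (of_nat t * c) ^ p))"
    using commutator_pth_power_CHAR[of A Q] assms(1) by (simp add: CHAR_poly_mapping p_def c_def)
  also have "coefficient \<dots> \<in> V"
    using assms(4) c
    by (intro fa_subspace_coefficient_sum[OF V_sub] fa_subspace_coefficient_of_nat_times[OF V_sub]
        fa_subspace_coefficient_diff[OF V_sub] power_in_V)
      (simp_all add: constant_term_add constant_term_of_nat_times)
  finally show ?thesis
    by (simp add: p_def)
qed

section \<open>The \<open>T\<close>-spaces \<open>H\<^sub>n\<close>\<close>

lemma fa_var_pow_in_H_1: "fa_pow (fa_var 0) CHAR('k) \<in> (H (Suc 0) :: (nat list \<Rightarrow> 'k::field) set)"
  unfolding H.simps by (rule subsetD[OF T_gen_superset]) simp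

lemma T_space_H_1: "T_space (H (Suc 0) :: (nat list \<Rightarrow> 'k::field) set)"
  by (simp add: T_space_T_gen fa_pow_in_FA fa_var_in_FA)

lemma T_space_H: "T_space (H (Suc n) :: (nat list \<Rightarrow> 'k::field) set)"
proof (induction n)
  case (Suc n)
  then have "set_prod (H (Suc n)) (H (Suc 0)) \<subseteq> (FA :: (nat list \<Rightarrow> 'k) set)"
    using T_space_subset_FA[OF T_space_H_1] T_space_subset_FA[OF Suc.IH]
    by (auto simp: set_prod_def intro: fa_mult_in_FA)
  then show ?case
    by (simp add: T_space_T_gen)
qed (rule T_space_H_1)

lemma set_prod_H_subset: "set_prod (H (Suc n)) (H (Suc 0)) \<subseteq> H (Suc (Suc n))"
  using T_gen_superset by simp

lemma H_1_commutator:
  fixes u :: "nat list \<Rightarrow> 'k::field"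
  assumes "prime CHAR('k)" and "u \<in> H (Suc 0)" and "h \<in> FA"
  shows "fa_commutator u h \<in> H (Suc 0)"
proof (rule T_gen_commutator_closed[OF T_space_H_1 _ _ _ assms(3)])
  show "{fa_pow (fa_var 0) CHAR('k)} \<subseteq> (FA :: (nat list \<Rightarrow> 'k) set)"
    by (simp add: fa_pow_in_FA fa_var_in_FA)
  show "u \<in> T_gen {fa_pow (fa_var 0) CHAR('k)}"
    using assms(2) by simp
next
  fix \<phi> :: "(nat list \<Rightarrow> 'k) \<Rightarrow> (nat list \<Rightarrow> 'k)" and g w :: "nat list \<Rightarrow> 'k"
  assume "fa_endo \<phi>" and "g \<in> {fa_pow (fa_var 0) CHAR('k)}" and "w \<in> FA"
  obtain A :: "'k free_alg" where A: "\<phi> (fa_var 0) = coefficient A" "constant_term A = 0"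
    using fa_endo_FA[OF \<open>fa_endo \<phi>\<close> fa_var_in_FA] by (metis FA_coefficientE)
  obtain Q :: "'k free_alg" where Q: "w = coefficient Q" "constant_term Q = 0"
    using \<open>w \<in> FA\<close> by (metis FA_coefficientE)
  obtain n where n: "CHAR('k) = Suc n"
    using assms(1) by (metis not0_implies_Suc prime_gt_0_nat neq0_conv)
  have "\<phi> g = coefficient (A ^ CHAR('k))"
    using \<open>g \<in> _\<close> fa_endo_fa_pow[OF \<open>fa_endo \<phi>\<close> fa_var_in_FA, of 0 n] A n
    by (simp add: fa_pow_coefficient del: fa_pow.simps)
  then show "fa_commutator (\<phi> g) w \<in> H (Suc 0)"
    using T_space_commutator_pth_power[OF assms(1) T_space_H_1 fa_var_pow_in_H_1 A(2) Q(2)] Q(1)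
    by (simp add: fa_commutator_coefficient)
qed

lemma H_commutator:
  fixes u :: "nat list \<Rightarrow> 'k::field"
  assumes "prime CHAR('k)" and "u \<in> H (Suc n)" and "h \<in> FA"
  shows "fa_commutator u h \<in> H (Suc n)"
  using assms(2,3)
proof (induction n arbitrary: u h)
  case 0
  then show ?case
    using H_1_commutator[OF assms(1)] by blast
next
  case (Suc n)
  let ?G = "set_prod (H (Suc n)) (H (Suc 0)) :: (nat list \<Rightarrow> 'k) set"
  have G_FA: "?G \<subseteq> FA"
    using set_prod_H_subset T_space_subset_FA[OF T_space_H] by blast
  show ?case
  proof (rule T_gen_commutator_closed[OF T_space_H G_FA _ _ Suc.prems(2)])
    show "u \<in> T_gen ?G"
      using Suc.prems(1) by simp
  next
    fix \<phi> :: "(nat list \<Rightarrow> 'k) \<Rightarrow> (nat list \<Rightarrow> 'k)" and g w :: "nat list \<Rightarrow> 'k"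
    assume \<phi>: "fa_endo \<phi>" and "g \<in> ?G" and w: "w \<in> FA"
    then obtain b c where g: "g = fa_mult b c" and b: "b \<in> H (Suc n)" and c: "c \<in> H (Suc 0)"
      unfolding set_prod_def by blast
    have b': "\<phi> b \<in> H (Suc n)" and c': "\<phi> c \<in> H (Suc 0)"
      using T_space_endo_closed[OF T_space_H \<phi>] b c by blast+
    have FA: "b \<in> FA" "c \<in> FA" "\<phi> b \<in> FA" "\<phi> c \<in> FA"
      using b c b' c' T_space_subset_FA[OF T_space_H] by blast+
    have "fa_commutator (\<phi> g) w
        = fa_add (fa_mult (\<phi> b) (fa_commutator (\<phi> c) w)) (fa_mult (fa_commutator (\<phi> b) w) (\<phi> c))"
      using FA w \<phi> by (simp add: g fa_endo_fa_mult fa_commutator_fa_mult)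
    moreover have "fa_mult (\<phi> b) (fa_commutator (\<phi> c) w) \<in> H (Suc (Suc n))"
      using b' H_1_commutator[OF assms(1) c' w] set_prod_H_subset unfolding set_prod_def by blast
    moreover have "fa_mult (fa_commutator (\<phi> b) w) (\<phi> c) \<in> H (Suc (Suc n))"
      using Suc.IH[OF b' w] c' set_prod_H_subset unfolding set_prod_def by blast
    ultimately show "fa_commutator (\<phi> g) w \<in> H (Suc (Suc n))"
      by (metis fa_subspace_add T_space_imp_fa_subspace T_space_H)
  qed
qed

theorem lemma4p4:
  assumes "prime (CHAR('k::field))"
    and "m \<ge> 1"
    and "(u :: nat list \<Rightarrow> 'k) \<in> H m"
    and "v \<in> FA"
  shows "fa_sub (fa_mult u v) (fa_mult v u) \<in> H m"
proof -
  obtain n where "m = Suc n"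
    using assms(2) by (metis Suc_le_D One_nat_def)
  then show ?thesis
    using H_commutator[OF assms(1)] assms(3,4) by blast
qed

end
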